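(* For $0\le i\le n$, $dp(i,i)$ is the largest pair in $DP_i$, and its second component equals $\pi_i$. For $1\le i\le n$, $dp(i,i)$ is the smallest pair (in lexicographic order) greater than $dp(i-1,i-1)$ among integer pairs whose second component equals $\pi_i$.
   Context: Let $x_0\le x_1\le\cdots\le x_{n+1}$ be real numbers, $\{x\}=x-\lfloor x\rfloor$, and let $\pi=(\pi_0,\dots,\pi_{n+1})$ be the permutation of $\{0,\dots,n+1\}$ such that for $0\le i<j\le n+1$, $\pi_i>\pi_j$ iff $(\{x_i\},-x_i,i)<(\{x_j\},-x_j,j)$ lexicographically. For a sequence of indices $s_0<\cdots<s_k$, a drop is a consecutive pair $(s_{h-1},s_h)$ with $\pi_{s_{h-1}}>\pi_{s_h}$. For $0\le h\le i\le n$, $dp(h,i)$ is the pair $(d(h,i),p(h,i))$, where $d(h,i)$ is the minimum number of drops over all sequences of $h+1$ indices $0=s_0<s_1<\cdots<s_h\le i$, and $p(h,i)$ is the minimum of $\pi_{s_h}$ over all such sequences having exactly $d(h,i)$ drops. Let $DP_i=\{dp(h,i)\mid 0\le h\le i\}$. Pairs are compared lexicographically. *)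

theory Defs
  imports Complex_Main
begin

definition key_less :: "(nat \<Rightarrow> real) \<Rightarrow> nat \<Rightarrow> nat \<Rightarrow> bool" where
  "key_less x i j \<longleftrightarrow>
     frac (x i) < frac (x j) \<or>
     (frac (x i) = frac (x j) \<and> - x i < - x j) \<or>
     (frac (x i) = frac (x j) \<and> - x i = - x j \<and> i < j)"

definition adm_seq :: "nat \<Rightarrow> nat \<Rightarrow> (nat \<Rightarrow> nat) \<Rightarrow> bool" where
  "adm_seq h i s \<longleftrightarrow> s 0 = 0 \<and> (\<forall>k. 1 \<le> k \<and> k \<le> h \<longrightarrow> s (k - 1) < s k) \<and> s h \<le> i"

definition drops :: "(nat \<Rightarrow> nat) \<Rightarrow> nat \<Rightarrow> (nat \<Rightarrow> nat) \<Rightarrow> nat" where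
  "drops \<pi> h s = card {k. 1 \<le> k \<and> k \<le> h \<and> \<pi> (s (k - 1)) > \<pi> (s k)}"

definition dd :: "(nat \<Rightarrow> nat) \<Rightarrow> nat \<Rightarrow> nat \<Rightarrow> nat" where
  "dd \<pi> h i = (LEAST d. \<exists>s. adm_seq h i s \<and> drops \<pi> h s = d)"

definition pp :: "(nat \<Rightarrow> nat) \<Rightarrow> nat \<Rightarrow> nat \<Rightarrow> nat" where
  "pp \<pi> h i = (LEAST p. \<exists>s. adm_seq h i s \<and> drops \<pi> h s = dd \<pi> h i \<and> \<pi> (s h) = p)"

definition dp :: "(nat \<Rightarrow> nat) \<Rightarrow> nat \<Rightarrow> nat \<Rightarrow> int \<times> int" where
  "dp \<pi> h i = (int (dd \<pi> h i), int (pp \<pi> h i))"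

definition lex_less :: "int \<times> int \<Rightarrow> int \<times> int \<Rightarrow> bool" where
  "lex_less a b \<longleftrightarrow> fst a < fst b \<or> (fst a = fst b \<and> snd a < snd b)"

definition lex_le :: "int \<times> int \<Rightarrow> int \<times> int \<Rightarrow> bool" where
  "lex_le a b \<longleftrightarrow> lex_less a b \<or> a = b"

end

theory Submission
  imports Defs
begin

text \<open>For \<open>h = i\<close> the only admissible sequence is \<open>0, 1, \<dots>, i\<close>, so \<open>dp(i,i)\<close> is the
  pair (number of descents of \<pi> on \<open>[0, i]\<close>, \<open>\<pi> i\<close>). For \<open>0 < h \<le> i\<close> the sequence
  \<open>0, \<dots>, h - 1, i\<close> has no more drops than \<open>0, \<dots>, i\<close>, because a drop from \<open>h - 1\<close> to \<open>i\<close>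
  forces a descent of \<pi> in \<open>(h - 1, i]\<close>; hence \<open>dp(i,i)\<close> dominates \<open>DP i\<close>. From \<open>i - 1\<close>
  to \<open>i\<close> the descent count grows by one exactly when \<open>\<pi> i < \<pi> (i - 1)\<close>, which gives the least
  pair above \<open>dp(i-1,i-1)\<close> with second component \<open>\<pi> i\<close>.\<close>

definition descents :: "(nat \<Rightarrow> nat) \<Rightarrow> nat \<Rightarrow> nat \<Rightarrow> nat set" where
  "descents \<pi> a b = {k. a < k \<and> k \<le> b \<and> \<pi> k < \<pi> (k - 1)}"

lemma finite_descents [simp]: "finite (descents \<pi> a b)"
  unfolding descents_def by simp

lemma descents_split:
  assumes "a \<le> m" "m \<le> b"
  shows "card (descents \<pi> a b) = card (descents \<pi> a m) + card (descents \<pi> m b)"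
proof -
  have "descents \<pi> a b = descents \<pi> a m \<union> descents \<pi> m b"
    using assms unfolding descents_def by auto
  moreover have "descents \<pi> a m \<inter> descents \<pi> m b = {}"
    unfolding descents_def by auto
  ultimately show ?thesis by (simp add: card_Un_disjoint)
qed

lemma descents_Suc:
  "descents \<pi> j (Suc j) = (if \<pi> (Suc j) < \<pi> j then {Suc j} else {})"
  unfolding descents_def by (auto simp: le_Suc_eq)

lemma descents_nonempty:
  assumes "a < b" "\<pi> b < \<pi> a"
  shows "descents \<pi> a b \<noteq> {}"
  using assms
proof (induction b)
  case 0
  then show ?case by simp
next
  case (Suc b)
  show ?case
  proof (cases "a < b \<and> \<pi> b < \<pi> a")
    case True
    moreover have "descents \<pi> a b \<subseteq> descents \<pi> a (Suc b)"
      unfolding descents_def by auto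
    ultimately show ?thesis using Suc.IH by blast
  next
    case False
    have "a = b \<or> a < b" using Suc.prems(1) by linarith
    then have "\<pi> (Suc b) < \<pi> b" using False Suc.prems(2) by auto
    then have "Suc b \<in> descents \<pi> a (Suc b)" using Suc.prems unfolding descents_def by simp
    then show ?thesis by blast
  qed
qed

lemma drops_id: "drops \<pi> i (\<lambda>k. k) = card (descents \<pi> 0 i)"
  unfolding drops_def descents_def by (simp add: Suc_le_eq)

lemma adm_seq_gap:
  assumes "adm_seq h i s" "k + j \<le> h"
  shows "s k + j \<le> s (k + j)"
  using assms(2)
proof (induction j)
  case 0
  then show ?case by simp
next
  case (Suc j)
  have step: "s (m - 1) < s m" if "1 \<le> m" "m \<le> h" for m
    using assms(1) that unfolding adm_seq_def by blast
  have "s (k + j) < s (k + Suc j)"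
    using step[of "k + Suc j"] Suc.prems by simp
  then show ?case using Suc by simp
qed

lemma adm_seq_diag_eq:
  assumes "adm_seq i i s" "k \<le> i"
  shows "s k = k"
proof -
  have "s 0 = 0" "s i \<le> i" using assms(1) unfolding adm_seq_def by auto
  moreover have "s 0 + k \<le> s k" using adm_seq_gap[OF assms(1), of 0 k] assms(2) by simp
  moreover have "s k + (i - k) \<le> s i" using adm_seq_gap[OF assms(1), of k "i - k"] assms(2) by simp
  ultimately show ?thesis using assms(2) by linarith
qed

lemma adm_seq_id: "adm_seq i i (\<lambda>k. k)"
  unfolding adm_seq_def by auto

lemma drops_diag:
  assumes "adm_seq i i s"
  shows "drops \<pi> i s = drops \<pi> i (\<lambda>k. k)"
  unfolding drops_def using adm_seq_diag_eq[OF assms]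
  by (intro arg_cong[where f = card] Collect_cong) auto

lemma dd_diag: "dd \<pi> i i = card (descents \<pi> 0 i)"
  unfolding dd_def
proof (rule Least_equality)
  show "\<exists>s. adm_seq i i s \<and> drops \<pi> i s = card (descents \<pi> 0 i)"
    using adm_seq_id drops_id by blast
next
  fix d assume "\<exists>s. adm_seq i i s \<and> drops \<pi> i s = d"
  then obtain s where "adm_seq i i s" "drops \<pi> i s = d" by blast
  then show "card (descents \<pi> 0 i) \<le> d" by (simp add: drops_diag drops_id)
qed

lemma pp_diag: "pp \<pi> i i = \<pi> i"
  unfolding pp_def
proof (rule Least_equality)
  show "\<exists>s. adm_seq i i s \<and> drops \<pi> i s = dd \<pi> i i \<and> \<pi> (s i) = \<pi> i"
    using adm_seq_id[of i] drops_id[of \<pi> i] dd_diag[of \<pi> i] by auto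
next
  fix p assume "\<exists>s. adm_seq i i s \<and> drops \<pi> i s = dd \<pi> i i \<and> \<pi> (s i) = p"
  then obtain s where "adm_seq i i s" "\<pi> (s i) = p" by blast
  then show "\<pi> i \<le> p" using adm_seq_diag_eq[of i s i] by simp
qed

lemma dp_diag: "dp \<pi> i i = (int (card (descents \<pi> 0 i)), int (\<pi> i))"
  unfolding dp_def dd_diag pp_diag ..

lemma drops_jump_to_end:
  assumes "0 < h" "h \<le> i"
  shows "drops \<pi> h (\<lambda>k. if k = h then i else k) \<le> card (descents \<pi> 0 i)"
proof -
  let ?s = "\<lambda>k. if k = h then i else k"
  let ?last = "if \<pi> i < \<pi> (h - 1) then {h} else {}"
  have "{k. 1 \<le> k \<and> k \<le> h \<and> \<pi> (?s k) < \<pi> (?s (k - 1))} \<subseteq> descents \<pi> 0 (h - 1) \<union> ?last"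
    using assms unfolding descents_def by auto
  then have "drops \<pi> h ?s \<le> card (descents \<pi> 0 (h - 1) \<union> ?last)"
    unfolding drops_def by (intro card_mono) auto
  also have "\<dots> \<le> card (descents \<pi> 0 (h - 1)) + card ?last"
    by (rule card_Un_le)
  also have "card ?last \<le> card (descents \<pi> (h - 1) i)"
    using descents_nonempty[of "h - 1" i \<pi>] assms
    by (auto simp: Suc_leI card_gt_0_iff)
  also have "card (descents \<pi> 0 (h - 1)) + card (descents \<pi> (h - 1) i) = card (descents \<pi> 0 i)"
    using assms by (intro descents_split[symmetric]) auto
  finally show ?thesis by simp
qed

lemma lex_le_trans: "lex_le a b \<Longrightarrow> lex_le b c \<Longrightarrow> lex_le a c"
  unfolding lex_le_def lex_less_def by auto

lemma dp_lex_le_adm_seq: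
  assumes "adm_seq h i s"
  shows "lex_le (dp \<pi> h i) (int (drops \<pi> h s), int (\<pi> (s h)))"
proof -
  have dd: "dd \<pi> h i \<le> drops \<pi> h s"
    unfolding dd_def using assms by (intro Least_le) auto
  have "pp \<pi> h i \<le> \<pi> (s h)" if "drops \<pi> h s = dd \<pi> h i"
    unfolding pp_def using assms that by (intro Least_le) auto
  then show ?thesis
    using dd unfolding lex_le_def lex_less_def dp_def by auto
qed

lemma adm_seq_dominated_by_diag:
  assumes "h \<le> i"
  shows "\<exists>s. adm_seq h i s \<and> lex_le (int (drops \<pi> h s), int (\<pi> (s h))) (dp \<pi> i i)"
proof (cases "h = 0")
  case True
  have adm: "adm_seq h i (\<lambda>_. 0)" and drops: "drops \<pi> h (\<lambda>_. 0) = 0"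
    using True unfolding adm_seq_def drops_def by auto
  have "\<pi> 0 \<le> \<pi> i" if "card (descents \<pi> 0 i) = 0"
  proof (rule leI, rule notI)
    assume descent: "\<pi> i < \<pi> 0"
    then have "0 < i" by (cases i) auto
    then have "descents \<pi> 0 i \<noteq> {}" using descents_nonempty descent by blast
    then show False using that by simp
  qed
  then have "lex_le (0, int (\<pi> 0)) (dp \<pi> i i)"
    unfolding dp_diag lex_le_def lex_less_def by auto
  then show ?thesis using adm drops True by (intro exI[of _ "\<lambda>_. 0"]) simp
next
  case False
  define s where "s = (\<lambda>k. if k = h then i else k)"
  have "adm_seq h i s"
    using False assms unfolding adm_seq_def s_def by auto
  moreover have "lex_le (int (drops \<pi> h s), int (\<pi> (s h))) (dp \<pi> i i)"
    using drops_jump_to_end[of h i \<pi>] False assms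
    unfolding s_def dp_diag lex_le_def lex_less_def by auto
  ultimately show ?thesis by blast
qed

lemma dp_le_dp_diag:
  assumes "h \<le> i"
  shows "lex_le (dp \<pi> h i) (dp \<pi> i i)"
proof -
  obtain s where "adm_seq h i s" "lex_le (int (drops \<pi> h s), int (\<pi> (s h))) (dp \<pi> i i)"
    using adm_seq_dominated_by_diag[OF assms] by blast
  then show ?thesis by (blast intro: lex_le_trans dp_lex_le_adm_seq)
qed

lemma lex_least_above_with_snd:
  fixes d p q :: int
  assumes "p \<noteq> q"
  defines "e \<equiv> d + (if q < p then 1 else 0)"
  shows "lex_less (d, p) (e, q)"
    and "lex_less (d, p) (a, q) \<Longrightarrow> lex_le (e, q) (a, q)"
  using assms unfolding e_def lex_le_def lex_less_def by auto

lemma dp_diag_Suc_least_above: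
  assumes "\<pi> (Suc j) \<noteq> \<pi> j"
  shows "lex_less (dp \<pi> j j) (dp \<pi> (Suc j) (Suc j))"
    and "lex_less (dp \<pi> j j) (a, int (\<pi> (Suc j))) \<Longrightarrow>
         lex_le (dp \<pi> (Suc j) (Suc j)) (a, int (\<pi> (Suc j)))"
proof -
  let ?d = "int (card (descents \<pi> 0 j))"
  have "card (descents \<pi> 0 (Suc j)) = card (descents \<pi> 0 j) + card (descents \<pi> j (Suc j))"
    by (rule descents_split) auto
  then have next_diag: "dp \<pi> (Suc j) (Suc j) = (?d + (if \<pi> (Suc j) < \<pi> j then 1 else 0), int (\<pi> (Suc j)))"
    by (simp add: dp_diag descents_Suc)
  have "int (\<pi> j) \<noteq> int (\<pi> (Suc j))" using assms by simp
  note least = lex_least_above_with_snd[OF this, of ?d]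
  show "lex_less (dp \<pi> j j) (dp \<pi> (Suc j) (Suc j))"
    unfolding next_diag dp_diag[of \<pi> j] using least(1) by simp
  show "lex_le (dp \<pi> (Suc j) (Suc j)) (a, int (\<pi> (Suc j)))"
    if "lex_less (dp \<pi> j j) (a, int (\<pi> (Suc j)))"
    using that least(2) unfolding next_diag dp_diag[of \<pi> j] by simp
qed

theorem lemma8:
  fixes x :: "nat \<Rightarrow> real" and \<pi> :: "nat \<Rightarrow> nat" and n :: nat
  assumes mono: "\<And>i. i \<le> n \<Longrightarrow> x i \<le> x (Suc i)"
    and perm: "bij_betw \<pi> {0..n+1} {0..n+1}"
    and pi_def: "\<And>i j. i < j \<Longrightarrow> j \<le> n + 1 \<Longrightarrow> (\<pi> i > \<pi> j \<longleftrightarrow> key_less x i j)"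
  shows "(\<forall>i \<le> n. (\<forall>h \<le> i. lex_le (dp \<pi> h i) (dp \<pi> i i)) \<and> snd (dp \<pi> i i) = int (\<pi> i))
       \<and> (\<forall>i. 1 \<le> i \<and> i \<le> n \<longrightarrow>
            lex_less (dp \<pi> (i - 1) (i - 1)) (dp \<pi> i i) \<and> snd (dp \<pi> i i) = int (\<pi> i) \<and>
            (\<forall>a::int. lex_less (dp \<pi> (i - 1) (i - 1)) (a, int (\<pi> i)) \<longrightarrow>
                      lex_le (dp \<pi> i i) (a, int (\<pi> i))))"
proof (intro conjI allI impI)
  fix i h :: nat assume "i \<le> n" "h \<le> i"
  then show "lex_le (dp \<pi> h i) (dp \<pi> i i)" by (simp add: dp_le_dp_diag)
next
  fix i show "snd (dp \<pi> i i) = int (\<pi> i)" by (simp add: dp_diag)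
next
  fix i show "snd (dp \<pi> i i) = int (\<pi> i)" by (simp add: dp_diag)
next
  fix i assume i: "1 \<le> i \<and> i \<le> n"
  then obtain j where j: "i = Suc j" by (cases i) auto
  have step: "\<pi> (Suc j) \<noteq> \<pi> j"
    using bij_betw_imp_inj_on[OF perm] i j by (auto dest: inj_onD)
  show "lex_less (dp \<pi> (i - 1) (i - 1)) (dp \<pi> i i)"
    using dp_diag_Suc_least_above(1)[OF step] by (simp add: j)
  fix a assume "lex_less (dp \<pi> (i - 1) (i - 1)) (a, int (\<pi> i))"
  then show "lex_le (dp \<pi> i i) (a, int (\<pi> i))"
    using dp_diag_Suc_least_above(2)[OF step] by (simp add: j)
qed

end
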